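(* Let $R$ be a locally stable commutative ring. Then $R$ is an elementary divisor ring if and only if $R$ is a Bézout ring.
   Context: All rings are commutative with identity. A ring $R$ has stable range 1 if whenever $aR+bR=R$ there is $y\in R$ with $a+by$ a unit. $R$ is locally stable if whenever $a,b\in R$ with $aR+bR=R$ there is $y\in R$ such that $R/(a+by)R$ has stable range 1. A ring is Bézout if every finitely generated ideal is principal. A matrix $A$ (not necessarily square) admits diagonal reduction if there are invertible $P,Q$ with $PAQ$ diagonal $(d_{ij})$ and $d_{ii}\mid d_{(i+1)(i+1)}$ for each $i$; $R$ is an elementary divisor ring if every matrix over $R$ admits diagonal reduction. *)

theory Defs
  imports "Jordan_Normal_Form.Matrix"
begin

definition stable_range_one :: "'a::comm_ring_1 itself \<Rightarrow> bool" where
  "stable_range_one _ \<longleftrightarrow>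
     (\<forall>a b::'a. (\<exists>x y. a * x + b * y = 1) \<longrightarrow> (\<exists>y. (a + b * y) dvd 1))"

text \<open>The quotient ring R/cR has stable range 1, stated by unfolding the quotient:
  residues modulo c, ideal generated by residues of a,b is everything,
  and units of R/cR.\<close>
definition quotient_stable_range_one :: "'a::comm_ring_1 \<Rightarrow> bool" where
  "quotient_stable_range_one c \<longleftrightarrow>
     (\<forall>a b::'a. (\<exists>x y. c dvd (a * x + b * y - 1)) \<longrightarrow>
        (\<exists>y. \<exists>u. c dvd ((a + b * y) * u - 1)))"

definition locally_stable :: "'a::comm_ring_1 itself \<Rightarrow> bool" where
  "locally_stable _ \<longleftrightarrow>
     (\<forall>a b::'a. (\<exists>x y. a * x + b * y = 1) \<longrightarrow>
        (\<exists>y. quotient_stable_range_one (a + b * y)))"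

definition gen_ideal :: "'a::comm_ring_1 set \<Rightarrow> 'a set" where
  "gen_ideal S = {x. \<exists>T f. finite T \<and> T \<subseteq> S \<and> x = (\<Sum>s\<in>T. f s * s)}"

definition bezout_ring :: "'a::comm_ring_1 itself \<Rightarrow> bool" where
  "bezout_ring _ \<longleftrightarrow>
     (\<forall>S::'a set. finite S \<longrightarrow> (\<exists>d. gen_ideal S = range (\<lambda>r. d * r)))"

definition diagonal_divisibility :: "'a::comm_ring_1 mat \<Rightarrow> bool" where
  "diagonal_divisibility D \<longleftrightarrow>
     (\<forall>i j. i < dim_row D \<longrightarrow> j < dim_col D \<longrightarrow> i \<noteq> j \<longrightarrow> D $$ (i, j) = 0) \<and>
     (\<forall>i. Suc i < dim_row D \<longrightarrow> Suc i < dim_col D \<longrightarrow>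
        D $$ (i, i) dvd D $$ (Suc i, Suc i))"

definition admits_diagonal_reduction :: "'a::comm_ring_1 mat \<Rightarrow> bool" where
  "admits_diagonal_reduction A \<longleftrightarrow>
     (\<exists>P Q. P \<in> carrier_mat (dim_row A) (dim_row A) \<and> invertible_mat P \<and>
            Q \<in> carrier_mat (dim_col A) (dim_col A) \<and> invertible_mat Q \<and>
            diagonal_divisibility (P * A * Q))"

definition elementary_divisor_ring :: "'a::comm_ring_1 itself \<Rightarrow> bool" where
  "elementary_divisor_ring _ \<longleftrightarrow> (\<forall>A::'a mat. admits_diagonal_reduction A)"

end

theory Submission
  imports Defs
begin

text \<open>An elementary divisor ring is Bezout: a row \<open>(x\<^sub>1, \<dots>, x\<^sub>n)\<close> reduces to \<open>(d, 0, \<dots>, 0)\<close>,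
  and equivalent matrices have entries generating the same ideal, so \<open>(x\<^sub>1, \<dots>, x\<^sub>n) = (d)\<close>.

  For the converse, local stability first gives stable range at most two, which upgrades the Bezout
  property to the Hermite property: every pair factors as \<open>d (a', b')\<close> with \<open>a' R + b' R = R\<close>.
  Applied once more, now through the stable range one of a quotient \<open>R / k R\<close>, local stability shows
  that every \<open>2 \<times> 2\<close> matrix whose entries generate \<open>R\<close> satisfies \<open>x\<^sup>T A y = 1\<close> for some vectors
  \<open>x, y\<close>; completing \<open>x\<close> and \<open>y\<close> to invertible matrices diagonalises every \<open>2 \<times> 2\<close> matrix.
  General matrices are then reduced by pivoting: \<open>2 \<times> 2\<close> row and column operations make the corner
  entry divide all others, transvections clear the first row and column, and induction handles the
  remaining block.\<close>

section \<open>Local stability and stable range\<close>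

lemma quotient_stable_range_one_dvd:
  fixes s k :: "'a::comm_ring_1"
  assumes q: "quotient_stable_range_one s" and "k dvd s"
  shows "quotient_stable_range_one k"
  unfolding quotient_stable_range_one_def
proof (intro allI impI)
  fix a b :: 'a
  assume "\<exists>x y. k dvd (a * x + b * y - 1)"
  then obtain x y r where r: "a * x + b * y - 1 = k * r" by (auto elim: dvdE)
  have "s dvd (a * x + (b * y - k * r) * 1 - 1)"
    using r by (simp add: algebra_simps)
  then obtain t u where "s dvd ((a + (b * y - k * r) * t) * u - 1)"
    using q unfolding quotient_stable_range_one_def by blast
  then have "k dvd ((a + (b * y - k * r) * t) * u - 1) + k * (r * t * u)"
    using \<open>k dvd s\<close> by (meson dvd_add dvd_trans dvd_triv_left)
  also have "\<dots> = (a + b * (y * t)) * u - 1"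
    by (simp add: algebra_simps)
  finally show "\<exists>y u. k dvd ((a + b * y) * u - 1)" by blast
qed

lemma locally_stable_stable_range_two:
  fixes a b c :: "'a::comm_ring_1"
  assumes ls: "locally_stable TYPE('a)" and "a * x + b * y + c * z = 1"
  shows "\<exists>p q u v. (a + c * p) * u + (b + c * q) * v = 1"
proof -
  have e: "b * y + c * z = 1 - a * x"
    using assms(2) by (simp add: algebra_simps)
  then have "a * x + (b * y + c * z) * 1 = 1" by simp
  then obtain w where w: "quotient_stable_range_one (a + (b * y + c * z) * w)"
    using ls unfolding locally_stable_def by blast
  define s where "s = a + (b * y + c * z) * w"
  have "b * (y * (1 - w * x)) + c * (z * (1 - w * x)) - 1 = (1 - a * x) * (1 - w * x) - 1"
    by (simp flip: e add: algebra_simps)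
  also have "\<dots> = s * (- x)"
    unfolding s_def e by (simp add: algebra_simps)
  finally have "s dvd b * (y * (1 - w * x)) + c * (z * (1 - w * x)) - 1"
    by simp
  then obtain p u where "s dvd (b + c * p) * u - 1"
    using w unfolding quotient_stable_range_one_def s_def by blast
  then obtain v where v: "(b + c * p) * u - 1 = s * v" by (elim dvdE)
  have "(a + c * (z * w - p * y * w)) * (- v) + (b + c * p) * (u - y * w * v)
      = ((b + c * p) * u - 1) - s * v + 1"
    unfolding s_def by (simp add: algebra_simps)
  also have "\<dots> = 1" using v by simp
  finally show ?thesis by blast
qed

section \<open>Bezout rings and the Hermite property\<close>

text \<open>The interpretation stays local: its simp rule \<open>a * (b * x) = (a * b) * x\<close> loops against the
  associativity rule of \<open>algebra_simps\<close>.\<close>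

context
begin

interpretation ring_module: Modules.module "(*) :: 'a::comm_ring_1 \<Rightarrow> 'a \<Rightarrow> 'a"
  by unfold_locales (simp_all add: algebra_simps)

lemma gen_ideal_eq_span: "gen_ideal S = ring_module.span S"
  unfolding gen_ideal_def ring_module.span_explicit by auto

lemma gen_ideal_base: "x \<in> S \<Longrightarrow> x \<in> gen_ideal S"
  unfolding gen_ideal_eq_span by (rule ring_module.span_base)

lemma gen_ideal_mult: "x \<in> gen_ideal S \<Longrightarrow> c * x \<in> gen_ideal S"
  unfolding gen_ideal_eq_span by (rule ring_module.span_scale)

lemma gen_ideal_sum: "(\<And>i. i \<in> I \<Longrightarrow> f i \<in> gen_ideal S) \<Longrightarrow> sum f I \<in> gen_ideal S"
  unfolding gen_ideal_eq_span by (rule ring_module.span_sum)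

lemma gen_ideal_singleton: "gen_ideal {g} = range ((*) g)"
  unfolding gen_ideal_eq_span ring_module.span_singleton by (auto simp: mult.commute)

lemma gen_ideal_pair_iff: "z \<in> gen_ideal {a, b} \<longleftrightarrow> (\<exists>u v. z = a * u + b * v)"
proof -
  have "z \<in> gen_ideal {a, b} \<longleftrightarrow> (\<exists>u v. z - u * a = v * b)"
    unfolding gen_ideal_eq_span ring_module.span_breakdown_eq ring_module.span_singleton by auto
  also have "\<dots> \<longleftrightarrow> (\<exists>u v. z = a * u + b * v)"
    by (metis add_diff_cancel_left' diff_eq_eq mult.commute)
  finally show ?thesis .
qed

lemma gen_ideal_eq_principal:
  assumes "g \<in> gen_ideal S" and "\<And>s. s \<in> S \<Longrightarrow> g dvd s"
  shows "gen_ideal S = range ((*) g)"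
proof
  have "S \<subseteq> ring_module.span {g}"
  proof
    fix s assume "s \<in> S"
    then obtain k where "s = g * k" using assms(2) by (blast elim: dvdE)
    then show "s \<in> ring_module.span {g}"
      unfolding ring_module.span_singleton by (simp add: mult.commute)
  qed
  then show "gen_ideal S \<subseteq> range ((*) g)"
    unfolding gen_ideal_singleton[symmetric] gen_ideal_eq_span
    by (rule ring_module.span_minimal[OF _ ring_module.subspace_span])
  show "range ((*) g) \<subseteq> gen_ideal S"
    using gen_ideal_mult[OF assms(1)] by (auto simp: mult.commute)
qed

end

lemma bezout_ring_gcd:
  fixes a b :: "'a::comm_ring_1"
  assumes "bezout_ring TYPE('a)"
  shows "\<exists>d x y. d dvd a \<and> d dvd b \<and> d = a * x + b * y"
proof -
  obtain d where d: "gen_ideal {a, b} = range ((*) d)"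
    using assms unfolding bezout_ring_def by (meson finite.emptyI finite.insertI)
  have "a \<in> range ((*) d)" "b \<in> range ((*) d)"
    unfolding d[symmetric] by (simp_all add: gen_ideal_base)
  then have "d dvd a" "d dvd b" by auto
  moreover have "d \<in> gen_ideal {a, b}"
    unfolding d by (rule range_eqI[of _ _ 1]) simp
  then obtain x y where "d = a * x + b * y"
    unfolding gen_ideal_pair_iff by blast
  ultimately show ?thesis by blast
qed

text \<open>The cofactors \<open>a\<^sub>1, b\<^sub>1\<close> of \<open>d = a x + b y\<close> only satisfy \<open>a\<^sub>1 x + b\<^sub>1 y = 1\<close> modulo the
  annihilator of \<open>d\<close>; stable range two lets us shift them by annihilating elements until they
  become unimodular.\<close>

lemma bezout_coprime_cofactors:
  fixes a b :: "'a::comm_ring_1"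
  assumes bz: "bezout_ring TYPE('a)" and ls: "locally_stable TYPE('a)"
  shows "\<exists>d a' b' u v. a = d * a' \<and> b = d * b' \<and> a' * u + b' * v = 1"
proof -
  obtain d x y where "d dvd a" "d dvd b" and d: "d = a * x + b * y"
    using bezout_ring_gcd[OF bz] by blast
  obtain a1 b1 where a: "a = d * a1" and b: "b = d * b1"
    using \<open>d dvd a\<close> \<open>d dvd b\<close> by (elim dvdE)
  define t where "t = 1 - a1 * x - b1 * y"
  have "d * t = d - (d * a1) * x - (d * b1) * y"
    unfolding t_def by (simp add: algebra_simps)
  also have "\<dots> = d - a * x - b * y"
    by (simp add: a b)
  also have "\<dots> = 0"
    using d by simp
  finally have dt: "d * t = 0" .
  have "a1 * x + b1 * y + t * 1 = 1"
    unfolding t_def by simp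
  then obtain p q u v where "(a1 + t * p) * u + (b1 + t * q) * v = 1"
    using locally_stable_stable_range_two[OF ls] by blast
  moreover have "a = d * (a1 + t * p)" "b = d * (b1 + t * q)"
    using a b dt by (simp_all add: distrib_left mult.assoc[symmetric])
  ultimately show ?thesis by blast
qed

lemma bezout_coprime_cofactors_4:
  fixes a b c d :: "'a::comm_ring_1"
  assumes bz: "bezout_ring TYPE('a)" and ls: "locally_stable TYPE('a)"
  shows "\<exists>g a' b' c' d' X Y Z W. a = g * a' \<and> b = g * b' \<and> c = g * c' \<and> d = g * d' \<and>
           a' * X + b' * Y + c' * Z + d' * W = 1"
proof -
  obtain e1 a1 b1 u1 v1 where a: "a = e1 * a1" and b: "b = e1 * b1" and uv1: "a1 * u1 + b1 * v1 = 1"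
    using bezout_coprime_cofactors[OF bz ls] by blast
  obtain e2 c1 d1 u2 v2 where c: "c = e2 * c1" and d: "d = e2 * d1" and uv2: "c1 * u2 + d1 * v2 = 1"
    using bezout_coprime_cofactors[OF bz ls] by blast
  obtain g f1 f2 u3 v3 where e1: "e1 = g * f1" and e2: "e2 = g * f2" and uv3: "f1 * u3 + f2 * v3 = 1"
    using bezout_coprime_cofactors[OF bz ls] by blast
  have "(f1 * a1) * (u1 * u3) + (f1 * b1) * (v1 * u3) + (f2 * c1) * (u2 * v3) + (f2 * d1) * (v2 * v3)
      = f1 * u3 * (a1 * u1 + b1 * v1) + f2 * v3 * (c1 * u2 + d1 * v2)"
    by (simp add: algebra_simps)
  also have "\<dots> = 1"
    using uv1 uv2 uv3 by simp
  finally have "(f1 * a1) * (u1 * u3) + (f1 * b1) * (v1 * u3) + (f2 * c1) * (u2 * v3)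
      + (f2 * d1) * (v2 * v3) = 1" .
  moreover have "a = g * (f1 * a1)" "b = g * (f1 * b1)" "c = g * (f2 * c1)" "d = g * (f2 * d1)"
    unfolding a b c d e1 e2 by (simp_all add: mult.assoc)
  ultimately show ?thesis by blast
qed

section \<open>Two-by-two matrices\<close>

text \<open>Local stability provides a modulus \<open>k\<close>, a common factor of \<open>a\<close> and \<open>b + c Z w\<close> with unimodular
  cofactors, such that \<open>R / k R\<close> has stable range one; the vectors are found by lifting a unit
  modulo \<open>k\<close>.\<close>

lemma triangular_bilinear_form_eq_one:
  fixes a b c :: "'a::comm_ring_1"
  assumes bz: "bezout_ring TYPE('a)" and ls: "locally_stable TYPE('a)"
    and h: "a * X + b * Y + c * Z = 1"
  shows "\<exists>x1 x2 y1 y2. x1 * y1 * a + x1 * y2 * b + x2 * y2 * c = 1"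
proof -
  have "b * Y + (a * X + c * Z) * 1 = 1"
    using h by (simp add: algebra_simps)
  then obtain w where w: "quotient_stable_range_one (b + (a * X + c * Z) * w)"
    using ls unfolding locally_stable_def by blast
  obtain k a' b' \<alpha> \<beta> where a: "a = k * a'" and b': "b + c * (Z * w) = k * b'"
    and cop: "a' * \<alpha> + b' * \<beta> = 1"
    using bezout_coprime_cofactors[OF bz ls, of a "b + c * (Z * w)"] by blast
  have b: "b = k * b' - c * (Z * w)"
    using b' by (simp add: algebra_simps)
  have "b + (a * X + c * Z) * w = k * (a' * (X * w) + b')"
    using a b' by (simp add: algebra_simps)
  then have qk: "quotient_stable_range_one k"
    using quotient_stable_range_one_dvd[OF w] by (metis dvd_triv_left)
  define u where "u = - (c * \<beta>)"
  define v where "v = - (c * a')"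
  have "u * (- ((Z - Z * w * Y) * b')) + v * (- ((Z - Z * w * Y) * \<alpha>)) - 1
      = c * (Z - Z * w * Y) * (a' * \<alpha> + b' * \<beta>) - 1"
    unfolding u_def v_def by (simp add: algebra_simps)
  also have "\<dots> = c * Z - c * Z * w * Y - 1"
    using cop by (simp add: algebra_simps)
  also have "\<dots> = c * Z - c * Z * w * Y - (a * X + b * Y + c * Z)"
    using h by simp
  also have "\<dots> = k * (- (a' * X) - b' * Y)"
    unfolding a b by (simp add: algebra_simps)
  finally have "k dvd u * (- ((Z - Z * w * Y) * b')) + v * (- ((Z - Z * w * Y) * \<alpha>)) - 1"
    by simp
  then obtain t e where "k dvd (u + v * t) * e - 1"
    using qk unfolding quotient_stable_range_one_def by blast
  then obtain m where m: "(u + v * t) * e - 1 = k * m" by (elim dvdE)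
  have "(- m) * (\<alpha> - b' * t) * a + (- m) * (\<beta> + a' * t) * b
        + (- e - m * (Z * w)) * (\<beta> + a' * t) * c
      = - (m * k) * (a' * \<alpha> + b' * \<beta>) - e * c * (\<beta> + a' * t)"
    unfolding a b by (simp add: algebra_simps)
  also have "\<dots> = (u + v * t) * e - k * m"
    using cop unfolding u_def v_def by (simp add: algebra_simps)
  also have "\<dots> = 1"
    using m by (simp add: algebra_simps)
  finally show ?thesis by blast
qed

text \<open>After factoring \<open>(a, c) = g (a', c')\<close> with \<open>(a', c')\<close> unimodular, rewriting \<open>b\<close> and \<open>d\<close> in the
  basis \<open>(a', c'), (-\<gamma>, \<alpha>)\<close> makes the form triangular in \<open>g, t2, t3\<close>.\<close>

lemma bilinear_form_eq_one:
  fixes a b c d :: "'a::comm_ring_1"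
  assumes bz: "bezout_ring TYPE('a)" and ls: "locally_stable TYPE('a)"
    and h: "a * X + b * Y + c * Z + d * W = 1"
  shows "\<exists>x1 x2 y1 y2. x1 * y1 * a + x1 * y2 * b + x2 * y1 * c + x2 * y2 * d = 1"
proof -
  obtain g a' c' \<alpha> \<gamma> where a: "a = g * a'" and c: "c = g * c'" and cop: "a' * \<alpha> + c' * \<gamma> = 1"
    using bezout_coprime_cofactors[OF bz ls, of a c] by blast
  define t2 where "t2 = \<alpha> * b + \<gamma> * d"
  define t3 where "t3 = - (c' * b) + a' * d"
  have "a' * t2 - \<gamma> * t3 = b * (a' * \<alpha> + c' * \<gamma>)"
    unfolding t2_def t3_def by (simp add: algebra_simps)
  then have b: "b = a' * t2 - \<gamma> * t3"
    using cop by simp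
  have "c' * t2 + \<alpha> * t3 = d * (a' * \<alpha> + c' * \<gamma>)"
    unfolding t2_def t3_def by (simp add: algebra_simps)
  then have d: "d = c' * t2 + \<alpha> * t3"
    using cop by simp
  have "g * (a' * X + c' * Z) + t2 * (a' * Y + c' * W) + t3 * (- (\<gamma> * Y) + \<alpha> * W)
      = a * X + b * Y + c * Z + d * W"
    unfolding a c b d by (simp add: algebra_simps)
  then obtain x1 x2 y1 y2 where xy: "x1 * y1 * g + x1 * y2 * t2 + x2 * y2 * t3 = 1"
    using triangular_bilinear_form_eq_one[OF bz ls] h by (metis (no_types))
  have "(x1 * \<alpha> - x2 * c') * y1 * a + (x1 * \<alpha> - x2 * c') * y2 * b
        + (x1 * \<gamma> + x2 * a') * y1 * c + (x1 * \<gamma> + x2 * a') * y2 * d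
      = x1 * y1 * g * (a' * \<alpha> + c' * \<gamma>) + x1 * y2 * t2 + x2 * y2 * t3"
    unfolding a c t2_def t3_def by (simp add: algebra_simps)
  also have "\<dots> = 1"
    using xy cop by simp
  finally show ?thesis by blast
qed

text \<open>Once \<open>x\<^sup>T A' y = 1\<close>, the row \<open>x\<close> and the column \<open>y\<close> complete to determinant one
  matrices using the vectors \<open>A' y\<close> and \<open>x\<^sup>T A'\<close>.\<close>

lemma diagonal_reduction_2x2:
  fixes a b c d :: "'a::comm_ring_1"
  assumes bz: "bezout_ring TYPE('a)" and ls: "locally_stable TYPE('a)"
  shows "\<exists>p1 p2 p3 p4 q1 q2 q3 q4 e1 e2. p1 * p4 - p2 * p3 = 1 \<and> q1 * q4 - q2 * q3 = 1 \<and>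
    (p1 * a + p2 * c) * q1 + (p1 * b + p2 * d) * q3 = e1 \<and>
    (p1 * a + p2 * c) * q2 + (p1 * b + p2 * d) * q4 = 0 \<and>
    (p3 * a + p4 * c) * q1 + (p3 * b + p4 * d) * q3 = 0 \<and>
    (p3 * a + p4 * c) * q2 + (p3 * b + p4 * d) * q4 = e2 \<and>
    e1 dvd e2 \<and> e1 dvd a"
proof -
  obtain g a' b' c' d' X Y Z W where
    entries: "a = g * a'" "b = g * b'" "c = g * c'" "d = g * d'"
    and "a' * X + b' * Y + c' * Z + d' * W = 1"
    using bezout_coprime_cofactors_4[OF bz ls, of a b c d] by blast
  then obtain x1 x2 y1 y2 where xy: "x1 * y1 * a' + x1 * y2 * b' + x2 * y1 * c' + x2 * y2 * d' = 1"
    using bilinear_form_eq_one[OF bz ls] by blast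
  define v1 where "v1 = a' * y1 + b' * y2"
  define v2 where "v2 = c' * y1 + d' * y2"
  define w1 where "w1 = x1 * a' + x2 * c'"
  define w2 where "w2 = x1 * b' + x2 * d'"
  have "x1 * v1 - x2 * (- v2) = 1" "y1 * w1 - (- w2) * y2 = 1"
    using xy unfolding v1_def v2_def w1_def w2_def by (simp_all add: algebra_simps)
  moreover have "(x1 * a + x2 * c) * y1 + (x1 * b + x2 * d) * y2 = g"
  proof -
    have "(x1 * a + x2 * c) * y1 + (x1 * b + x2 * d) * y2
        = g * (x1 * y1 * a' + x1 * y2 * b' + x2 * y1 * c' + x2 * y2 * d')"
      unfolding entries by (simp add: algebra_simps)
    then show ?thesis using xy by simp
  qed
  moreover have "(x1 * a + x2 * c) * (- w2) + (x1 * b + x2 * d) * w1 = 0"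
    "(- v2 * a + v1 * c) * y1 + (- v2 * b + v1 * d) * y2 = 0"
    unfolding entries v1_def v2_def w1_def w2_def by (simp_all add: algebra_simps)
  moreover have "(- v2 * a + v1 * c) * (- w2) + (- v2 * b + v1 * d) * w1
      = g * ((- v2 * a' + v1 * c') * (- w2) + (- v2 * b' + v1 * d') * w1)"
    unfolding entries by (simp add: algebra_simps)
  moreover have "g dvd a"
    unfolding entries by simp
  ultimately show ?thesis
    by (intro exI conjI) (assumption | rule dvd_triv_left)+
qed

section \<open>Equivalence of matrices\<close>

lemma mat_mult_left_index_in_gen_ideal:
  fixes A :: "'a::comm_ring_1 mat"
  assumes "P \<in> carrier_mat k m" "A \<in> carrier_mat m n" "i < k" "j < n"
    and "\<And>l. l < m \<Longrightarrow> A $$ (l, j) \<in> gen_ideal S"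
  shows "(P * A) $$ (i, j) \<in> gen_ideal S"
proof -
  have "(P * A) $$ (i, j) = (\<Sum>l\<in>{0..<m}. P $$ (i, l) * A $$ (l, j))"
    using assms(1-4) by (simp add: scalar_prod_def)
  also have "\<dots> \<in> gen_ideal S"
    using assms(5) by (auto intro!: gen_ideal_sum gen_ideal_mult)
  finally show ?thesis .
qed

lemma mat_mult_right_index_in_gen_ideal:
  fixes A :: "'a::comm_ring_1 mat"
  assumes "A \<in> carrier_mat m n" "Q \<in> carrier_mat n l" "i < m" "j < l"
    and "\<And>k. k < n \<Longrightarrow> A $$ (i, k) \<in> gen_ideal S"
  shows "(A * Q) $$ (i, j) \<in> gen_ideal S"
proof -
  have "(A * Q) $$ (i, j) = (\<Sum>k\<in>{0..<n}. Q $$ (k, j) * A $$ (i, k))"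
    using assms(1-4) by (simp add: scalar_prod_def mult.commute)
  also have "\<dots> \<in> gen_ideal S"
    using assms(5) by (auto intro!: gen_ideal_sum gen_ideal_mult)
  finally show ?thesis .
qed

lemma mat_mult_index_in_gen_ideal:
  fixes A :: "'a::comm_ring_1 mat"
  assumes "P \<in> carrier_mat k m" "A \<in> carrier_mat m n" "Q \<in> carrier_mat n l" "i < k" "j < l"
    and "\<And>i j. i < m \<Longrightarrow> j < n \<Longrightarrow> A $$ (i, j) \<in> gen_ideal S"
  shows "(P * A * Q) $$ (i, j) \<in> gen_ideal S"
proof (rule mat_mult_right_index_in_gen_ideal)
  fix j' assume "j' < n"
  then show "(P * A) $$ (i, j') \<in> gen_ideal S"
    using assms by (intro mat_mult_left_index_in_gen_ideal) auto
qed (use assms in auto)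

lemma dvd_iff_in_gen_ideal_singleton: "g dvd x \<longleftrightarrow> x \<in> gen_ideal {g}"
  unfolding gen_ideal_singleton by (auto elim!: dvdE)

lemma dvd_mat_mult_left_index:
  fixes A :: "'a::comm_ring_1 mat"
  assumes "P \<in> carrier_mat k m" "A \<in> carrier_mat m n" "i < k" "j < n"
    and "\<And>l. l < m \<Longrightarrow> g dvd A $$ (l, j)"
  shows "g dvd (P * A) $$ (i, j)"
  using assms mat_mult_left_index_in_gen_ideal unfolding dvd_iff_in_gen_ideal_singleton by blast

lemma invertible_mat_iff_inverse:
  fixes P :: "'a::comm_ring_1 mat"
  assumes P: "P \<in> carrier_mat n n"
  shows "invertible_mat P \<longleftrightarrow> (\<exists>P' \<in> carrier_mat n n. P * P' = 1\<^sub>m n \<and> P' * P = 1\<^sub>m n)"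
proof
  assume "invertible_mat P"
  then obtain P' where P': "P * P' = 1\<^sub>m n" "P' * P = 1\<^sub>m (dim_row P')"
    using P unfolding invertible_mat_def inverts_mat_def by auto
  have "dim_col P' = dim_col (P * P')"
    by simp
  then have "dim_col P' = n"
    unfolding P'(1) by simp
  have "dim_row P' = dim_col (P' * P)"
    unfolding P'(2) by simp
  then have "dim_row P' = n"
    using P by simp
  have "P' \<in> carrier_mat n n"
    using \<open>dim_row P' = n\<close> \<open>dim_col P' = n\<close> by (rule carrier_matI)
  moreover have "P' * P = 1\<^sub>m n"
    using P'(2) unfolding \<open>dim_row P' = n\<close> .
  ultimately show "\<exists>P' \<in> carrier_mat n n. P * P' = 1\<^sub>m n \<and> P' * P = 1\<^sub>m n"
    using P'(1) by blast
next
  assume "\<exists>P' \<in> carrier_mat n n. P * P' = 1\<^sub>m n \<and> P' * P = 1\<^sub>m n"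
  then obtain P' where "P' \<in> carrier_mat n n" "P * P' = 1\<^sub>m n" "P' * P = 1\<^sub>m n"
    by blast
  moreover have "dim_row P = n" "dim_col P = n"
    using P by auto
  ultimately show "invertible_mat P"
    unfolding invertible_mat_def inverts_mat_def square_mat.simps
    by (intro conjI exI[of _ P']) auto
qed

lemma invertible_mat_one: "invertible_mat (1\<^sub>m n :: 'a::comm_ring_1 mat)"
  using invertible_mat_iff_inverse[of "1\<^sub>m n" n] by auto

lemma invertible_mat_mult:
  fixes P Q :: "'a::comm_ring_1 mat"
  assumes P: "P \<in> carrier_mat n n" "invertible_mat P" and Q: "Q \<in> carrier_mat n n" "invertible_mat Q"
  shows "invertible_mat (P * Q)"
proof -
  obtain P' where P': "P' \<in> carrier_mat n n" "P * P' = 1\<^sub>m n" "P' * P = 1\<^sub>m n"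
    using P invertible_mat_iff_inverse by blast
  obtain Q' where Q': "Q' \<in> carrier_mat n n" "Q * Q' = 1\<^sub>m n" "Q' * Q = 1\<^sub>m n"
    using Q invertible_mat_iff_inverse by blast
  have "P * Q * (Q' * P') = P * (Q * Q') * P'"
    using P(1) Q(1) P'(1) Q'(1) by (simp add: assoc_mult_mat[of _ n n _ n _ n])
  also have "\<dots> = 1\<^sub>m n"
    using P P' Q' by (simp del: assoc_mult_mat)
  finally have right: "P * Q * (Q' * P') = 1\<^sub>m n" .
  have "Q' * P' * (P * Q) = Q' * (P' * P) * Q"
    using P(1) Q(1) P'(1) Q'(1) by (simp add: assoc_mult_mat[of _ n n _ n _ n])
  also have "\<dots> = 1\<^sub>m n"
    using Q P' Q' by (simp del: assoc_mult_mat)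
  finally have left: "Q' * P' * (P * Q) = 1\<^sub>m n" .
  show ?thesis
    using invertible_mat_iff_inverse[of "P * Q" n] P Q P' Q' right left by (meson mult_carrier_mat)
qed

definition equivalent_mat :: "'a::comm_ring_1 mat \<Rightarrow> 'a mat \<Rightarrow> bool" where
  "equivalent_mat A B \<longleftrightarrow>
     (\<exists>P Q. P \<in> carrier_mat (dim_row A) (dim_row A) \<and> invertible_mat P \<and>
            Q \<in> carrier_mat (dim_col A) (dim_col A) \<and> invertible_mat Q \<and> B = P * A * Q)"

lemma admits_diagonal_reduction_iff:
  "admits_diagonal_reduction A \<longleftrightarrow> (\<exists>D. equivalent_mat A D \<and> diagonal_divisibility D)"
  unfolding admits_diagonal_reduction_def equivalent_mat_def by blast

lemma equivalent_mat_refl: "equivalent_mat A A"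
  unfolding equivalent_mat_def
  by (intro exI[of _ "1\<^sub>m (dim_row A)"] exI[of _ "1\<^sub>m (dim_col A)"]) (simp add: invertible_mat_one)

lemma equivalent_mat_carrier:
  "A \<in> carrier_mat m n \<Longrightarrow> equivalent_mat A B \<Longrightarrow> B \<in> carrier_mat m n"
  unfolding equivalent_mat_def by auto

lemma equivalent_mat_trans:
  assumes AB: "equivalent_mat A B" and BC: "equivalent_mat B C"
  shows "equivalent_mat A C"
proof -
  define m n where "m = dim_row A" and "n = dim_col A"
  have A: "A \<in> carrier_mat m n"
    unfolding m_def n_def by auto
  obtain P Q where P: "P \<in> carrier_mat m m" "invertible_mat P"
    and Q: "Q \<in> carrier_mat n n" "invertible_mat Q" and B: "B = P * A * Q"
    using AB unfolding equivalent_mat_def m_def n_def by blast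
  have "dim_row B = m" "dim_col B = n"
    unfolding B using P Q by auto
  then obtain P2 Q2 where P2: "P2 \<in> carrier_mat m m" "invertible_mat P2"
    and Q2: "Q2 \<in> carrier_mat n n" "invertible_mat Q2" and C: "C = P2 * B * Q2"
    using BC unfolding equivalent_mat_def by metis
  have PA: "P * A \<in> carrier_mat m n" and P2PA: "P2 * P * A \<in> carrier_mat m n"
    using A P P2 by auto
  have "C = P2 * (P * A * Q) * Q2"
    unfolding C B ..
  also have "P2 * (P * A * Q) = P2 * (P * A) * Q"
    by (rule assoc_mult_mat[OF P2(1) PA Q(1), symmetric])
  also have "P2 * (P * A) = P2 * P * A"
    by (rule assoc_mult_mat[OF P2(1) P(1) A, symmetric])
  also have "P2 * P * A * Q * Q2 = P2 * P * A * (Q * Q2)"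
    by (rule assoc_mult_mat[OF P2PA Q(1) Q2(1)])
  finally have "C = (P2 * P) * A * (Q * Q2)" .
  moreover have "P2 * P \<in> carrier_mat m m" "Q * Q2 \<in> carrier_mat n n"
    using P Q P2 Q2 by auto
  moreover have "invertible_mat (P2 * P)" "invertible_mat (Q * Q2)"
    by (rule invertible_mat_mult[OF P2 P], rule invertible_mat_mult[OF Q Q2])
  ultimately show ?thesis
    unfolding equivalent_mat_def m_def[symmetric] n_def[symmetric] by blast
qed

lemma equivalent_mat_sym:
  fixes A :: "'a::comm_ring_1 mat"
  assumes A: "A \<in> carrier_mat m n" and AB: "equivalent_mat A B"
  shows "equivalent_mat B A"
proof -
  obtain P Q where P: "P \<in> carrier_mat m m" "invertible_mat P"
    and Q: "Q \<in> carrier_mat n n" "invertible_mat Q" and B: "B = P * A * Q"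
    using AB A unfolding equivalent_mat_def by auto
  obtain P' where P': "P' \<in> carrier_mat m m" "P' * P = 1\<^sub>m m" "invertible_mat P'"
    using P invertible_mat_iff_inverse by (metis (no_types, lifting))
  obtain Q' where Q': "Q' \<in> carrier_mat n n" "Q * Q' = 1\<^sub>m n" "invertible_mat Q'"
    using Q invertible_mat_iff_inverse by (metis (no_types, lifting))
  have PA: "P * A \<in> carrier_mat m n"
    using P A by simp
  have P'PA: "P' * (P * A) \<in> carrier_mat m n"
    using P'(1) PA by simp
  have "P' * B * Q' = P' * (P * A * Q) * Q'"
    unfolding B ..
  also have "P' * (P * A * Q) = P' * (P * A) * Q"
    by (rule assoc_mult_mat[OF P'(1) PA Q(1), symmetric])
  also have "P' * (P * A) * Q * Q' = P' * (P * A) * (Q * Q')"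
    by (rule assoc_mult_mat[OF P'PA Q(1) Q'(1)])
  also have "P' * (P * A) = P' * P * A"
    by (rule assoc_mult_mat[OF P'(1) P(1) A, symmetric])
  also have "P' * P * A * (Q * Q') = A"
    using P'(2) Q'(2) A by simp
  finally have A_eq: "A = P' * B * Q'" ..
  have "dim_row B = m" "dim_col B = n"
    unfolding B using P Q by auto
  then show ?thesis
    unfolding equivalent_mat_def using A_eq P'(1,3) Q'(1,3) by blast
qed

lemma equivalent_mat_mult_left:
  "A \<in> carrier_mat m n \<Longrightarrow> P \<in> carrier_mat m m \<Longrightarrow> invertible_mat P \<Longrightarrow> equivalent_mat A (P * A)"
  unfolding equivalent_mat_def
  by (intro exI[of _ P] exI[of _ "1\<^sub>m n"]) (auto simp: invertible_mat_one)

lemma equivalent_mat_mult_right: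
  "A \<in> carrier_mat m n \<Longrightarrow> Q \<in> carrier_mat n n \<Longrightarrow> invertible_mat Q \<Longrightarrow> equivalent_mat A (A * Q)"
  unfolding equivalent_mat_def
  by (intro exI[of _ "1\<^sub>m m"] exI[of _ Q]) (auto simp: invertible_mat_one)

lemma equivalent_mat_index_in_gen_ideal:
  fixes A :: "'a::comm_ring_1 mat"
  assumes A: "A \<in> carrier_mat m n" and AB: "equivalent_mat A B"
    and entries: "\<And>i j. i < m \<Longrightarrow> j < n \<Longrightarrow> A $$ (i, j) \<in> gen_ideal S" and ij: "i < m" "j < n"
  shows "B $$ (i, j) \<in> gen_ideal S"
proof -
  obtain P Q where "P \<in> carrier_mat m m" "Q \<in> carrier_mat n n" "B = P * A * Q"
    using AB A unfolding equivalent_mat_def by auto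
  then show ?thesis
    using mat_mult_index_in_gen_ideal[OF _ A _ ij entries] by simp
qed

lemma equivalent_mat_dvd_index:
  fixes A :: "'a::comm_ring_1 mat"
  assumes A: "A \<in> carrier_mat m n" and AB: "equivalent_mat A B"
    and entries: "\<And>i j. i < m \<Longrightarrow> j < n \<Longrightarrow> g dvd A $$ (i, j)" and ij: "i < m" "j < n"
  shows "g dvd B $$ (i, j)"
  using equivalent_mat_index_in_gen_ideal[OF A AB _ ij] entries
  unfolding dvd_iff_in_gen_ideal_singleton by blast

section \<open>Diagonal reduction over Bezout locally stable rings\<close>

definition embed2_mat :: "nat \<Rightarrow> nat \<Rightarrow> nat \<Rightarrow> 'a \<Rightarrow> 'a \<Rightarrow> 'a \<Rightarrow> 'a \<Rightarrow> 'a::comm_ring_1 mat" where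
  "embed2_mat n i j a b c d = mat n n (\<lambda>(r, s).
     if r = i \<and> s = i then a else if r = i \<and> s = j then b else
     if r = j \<and> s = i then c else if r = j \<and> s = j then d else
     if r \<in> {i, j} \<or> s \<in> {i, j} then 0 else of_bool (r = s))"

lemma embed2_mat_carrier [simp]: "embed2_mat n i j a b c d \<in> carrier_mat n n"
  and embed2_mat_dim [simp]: "dim_row (embed2_mat n i j a b c d) = n" "dim_col (embed2_mat n i j a b c d) = n"
  unfolding embed2_mat_def by simp_all

lemma embed2_mat_mult_index:
  fixes A :: "'a::comm_ring_1 mat"
  assumes A: "A \<in> carrier_mat m n" and ij: "i < m" "j < m" "i \<noteq> j" and rs: "r < m" "s < n"
  shows "(embed2_mat m i j a b c d * A) $$ (r, s) =
    (if r = i then a * A $$ (i, s) + b * A $$ (j, s)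
     else if r = j then c * A $$ (i, s) + d * A $$ (j, s) else A $$ (r, s))"
proof -
  define x where "x = (if r = i then a else if r = j then c else 0)"
  define y where "y = (if r = i then b else if r = j then d else 0)"
  have "(embed2_mat m i j a b c d * A) $$ (r, s) = (\<Sum>k\<in>{0..<m}. embed2_mat m i j a b c d $$ (r, k) * A $$ (k, s))"
    using A rs by (simp add: scalar_prod_def carrier_matD)
  also have "\<dots> = (\<Sum>k\<in>{0..<m}. (if k = i then x * A $$ (i, s) else 0) + (if k = j then y * A $$ (j, s) else 0)
       + (if k = r \<and> r \<noteq> i \<and> r \<noteq> j then A $$ (r, s) else 0))"
    by (rule sum.cong) (use ij rs in \<open>auto simp: embed2_mat_def x_def y_def\<close>)
  also have "\<dots> = x * A $$ (i, s) + y * A $$ (j, s) + (if r \<noteq> i \<and> r \<noteq> j then A $$ (r, s) else 0)"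
    using ij rs by (simp add: sum.distrib)
  finally show ?thesis
    unfolding x_def y_def using ij by auto
qed

lemma mult_embed2_mat_index:
  fixes A :: "'a::comm_ring_1 mat"
  assumes A: "A \<in> carrier_mat m n" and ij: "i < n" "j < n" "i \<noteq> j" and rs: "r < m" "s < n"
  shows "(A * embed2_mat n i j a b c d) $$ (r, s) =
    (if s = i then A $$ (r, i) * a + A $$ (r, j) * c
     else if s = j then A $$ (r, i) * b + A $$ (r, j) * d else A $$ (r, s))"
proof -
  define x where "x = (if s = i then a else if s = j then b else 0)"
  define y where "y = (if s = i then c else if s = j then d else 0)"
  have "(A * embed2_mat n i j a b c d) $$ (r, s) = (\<Sum>k\<in>{0..<n}. A $$ (r, k) * embed2_mat n i j a b c d $$ (k, s))"
    using A rs by (simp add: scalar_prod_def carrier_matD)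
  also have "\<dots> = (\<Sum>k\<in>{0..<n}. (if k = i then A $$ (r, i) * x else 0) + (if k = j then A $$ (r, j) * y else 0)
       + (if k = s \<and> s \<noteq> i \<and> s \<noteq> j then A $$ (r, s) else 0))"
    by (rule sum.cong) (use ij rs in \<open>auto simp: embed2_mat_def x_def y_def\<close>)
  also have "\<dots> = A $$ (r, i) * x + A $$ (r, j) * y + (if s \<noteq> i \<and> s \<noteq> j then A $$ (r, s) else 0)"
    using ij rs by (simp add: sum.distrib)
  finally show ?thesis
    unfolding x_def y_def using ij by auto
qed

lemma embed2_mat_mult_adjugate:
  fixes a b c d :: "'a::comm_ring_1"
  assumes det: "a * d - b * c = 1" and ij: "i < n" "j < n" "i \<noteq> j"
  shows "embed2_mat n i j a b c d * embed2_mat n i j d (- b) (- c) a = 1\<^sub>m n"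
proof (rule eq_matI)
  fix r s assume "r < dim_row (1\<^sub>m n :: 'a mat)" "s < dim_col (1\<^sub>m n :: 'a mat)"
  then have rs: "r < n" "s < n" by auto
  have "d * a - c * b = 1" "- (b * c) + a * d = 1" "d * a + - (c * b) = 1"
    using det by (simp_all add: algebra_simps)
  then show "(embed2_mat n i j a b c d * embed2_mat n i j d (- b) (- c) a) $$ (r, s) = 1\<^sub>m n $$ (r, s)"
    unfolding embed2_mat_mult_index[OF embed2_mat_carrier ij rs]
    using ij rs det by (auto simp: embed2_mat_def algebra_simps)
qed auto

lemma invertible_embed2_mat:
  fixes a b c d :: "'a::comm_ring_1"
  assumes det: "a * d - b * c = 1" and ij: "i < n" "j < n" "i \<noteq> j"
  shows "invertible_mat (embed2_mat n i j a b c d)"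
proof -
  have "d * a - (- b) * (- c) = 1"
    using det by (simp add: algebra_simps)
  from embed2_mat_mult_adjugate[OF this ij] embed2_mat_mult_adjugate[OF det ij]
  show ?thesis
    unfolding invertible_mat_iff_inverse[OF embed2_mat_carrier] by auto
qed

lemma row_elimination:
  fixes A :: "'a::comm_ring_1 mat"
  assumes bz: "bezout_ring TYPE('a)" and ls: "locally_stable TYPE('a)"
    and A: "A \<in> carrier_mat m n" and ij: "i < m" "i' < m" "i \<noteq> i'" and k: "k < n"
  shows "\<exists>E. E \<in> carrier_mat m m \<and> invertible_mat E \<and> (E * A) $$ (i', k) = 0 \<and>
           (\<forall>r<m. r \<noteq> i \<longrightarrow> r \<noteq> i' \<longrightarrow> (\<forall>s<n. (E * A) $$ (r, s) = A $$ (r, s)))"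
proof -
  obtain d a b u v where ab: "A $$ (i, k) = d * a" "A $$ (i', k) = d * b" and "a * u + b * v = 1"
    using bezout_coprime_cofactors[OF bz ls] by blast
  then have "u * a - v * (- b) = 1"
    by (simp add: algebra_simps)
  then have "invertible_mat (embed2_mat m i i' u v (- b) a)"
    using ij by (rule invertible_embed2_mat)
  moreover have "(embed2_mat m i i' u v (- b) a * A) $$ (i', k) = 0"
    using embed2_mat_mult_index[OF A ij ij(2) k] ij ab by (simp add: algebra_simps)
  moreover have "(embed2_mat m i i' u v (- b) a * A) $$ (r, s) = A $$ (r, s)"
    if "r < m" "r \<noteq> i" "r \<noteq> i'" "s < n" for r s
    using embed2_mat_mult_index[OF A ij that(1,4)] that by simp
  ultimately show ?thesis
    by (intro exI[of _ "embed2_mat m i i' u v (- b) a"]) auto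
qed

lemma column_elimination:
  fixes A :: "'a::comm_ring_1 mat"
  assumes bz: "bezout_ring TYPE('a)" and ls: "locally_stable TYPE('a)"
    and A: "A \<in> carrier_mat m n" and jk: "j < n" "j' < n" "j \<noteq> j'" and i: "i < m"
  shows "\<exists>E. E \<in> carrier_mat n n \<and> invertible_mat E \<and>
           (A * E) $$ (i, j) dvd A $$ (i, j) \<and> (A * E) $$ (i, j') = 0 \<and>
           (\<forall>r<m. \<forall>s<n. s \<noteq> j \<longrightarrow> s \<noteq> j' \<longrightarrow> (A * E) $$ (r, s) = A $$ (r, s))"
proof -
  obtain d a b u v where ab: "A $$ (i, j) = d * a" "A $$ (i, j') = d * b" and cop: "a * u + b * v = 1"
    using bezout_coprime_cofactors[OF bz ls] by blast
  define E where "E = embed2_mat n j j' u (- b) v a"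
  have "(A * E) $$ (i, j) = A $$ (i, j) * u + A $$ (i, j') * v"
    using mult_embed2_mat_index[OF A jk i jk(1)] unfolding E_def by simp
  also have "\<dots> = d * (a * u + b * v)"
    unfolding ab by (simp add: algebra_simps)
  finally have "(A * E) $$ (i, j) = d"
    using cop by simp
  moreover have "u * a - (- b) * v = 1"
    using cop by (simp add: algebra_simps)
  then have "invertible_mat E"
    unfolding E_def using jk by (rule invertible_embed2_mat)
  moreover have "(A * E) $$ (i, j') = 0"
    using mult_embed2_mat_index[OF A jk i jk(2)] jk ab unfolding E_def by (simp add: algebra_simps)
  moreover have "(A * E) $$ (r, s) = A $$ (r, s)"
    if "r < m" "s < n" "s \<noteq> j" "s \<noteq> j'" for r s
    using mult_embed2_mat_index[OF A jk that(1,2)] that unfolding E_def by simp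
  ultimately show ?thesis
    using ab by (intro exI[of _ E]) (auto simp: E_def)
qed

lemma clear_column_below:
  fixes A :: "'a::comm_ring_1 mat"
  assumes bz: "bezout_ring TYPE('a)" and ls: "locally_stable TYPE('a)"
    and A: "A \<in> carrier_mat m n" and b: "b < m" and k: "k < n"
  shows "\<exists>P. P \<in> carrier_mat m m \<and> invertible_mat P \<and> (\<forall>i<b. \<forall>j<n. (P * A) $$ (i, j) = A $$ (i, j)) \<and>
           (\<forall>i. b < i \<and> i < m \<longrightarrow> (P * A) $$ (i, k) = 0)"
proof -
  have "\<exists>P. P \<in> carrier_mat m m \<and> invertible_mat P \<and> (\<forall>i<b. \<forall>j<n. (P * A) $$ (i, j) = A $$ (i, j)) \<and>
          (\<forall>i. b < i \<and> i < r \<longrightarrow> (P * A) $$ (i, k) = 0)" if "r \<le> m" for r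
    using that
  proof (induction r)
    case 0
    then show ?case
      using A by (intro exI[of _ "1\<^sub>m m"]) (auto simp: invertible_mat_one)
  next
    case (Suc r)
    then obtain P where P: "P \<in> carrier_mat m m" "invertible_mat P"
      and keep: "\<forall>i<b. \<forall>j<n. (P * A) $$ (i, j) = A $$ (i, j)"
      and zero: "\<forall>i. b < i \<and> i < r \<longrightarrow> (P * A) $$ (i, k) = 0"
      by auto
    show ?case
    proof (cases "r \<le> b")
      case True
      then show ?thesis
        using P keep zero by (intro exI[of _ P]) auto
    next
      case False
      have PA: "P * A \<in> carrier_mat m n"
        using P A by simp
      obtain E where E: "E \<in> carrier_mat m m" "invertible_mat E" and Er: "(E * (P * A)) $$ (r, k) = 0"
        and Ekeep: "\<forall>i<m. i \<noteq> b \<longrightarrow> i \<noteq> r \<longrightarrow> (\<forall>j<n. (E * (P * A)) $$ (i, j) = (P * A) $$ (i, j))"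
        using row_elimination[OF bz ls PA b _ _ k, of r] False Suc.prems by auto
      have "E * P * A = E * (P * A)"
        using E(1) P(1) A by (rule assoc_mult_mat)
      then show ?thesis
        using E P keep zero Er Ekeep False Suc.prems b k
        by (intro exI[of _ "E * P"]) (auto simp: invertible_mat_mult less_Suc_eq)
    qed
  qed
  then show ?thesis
    by blast
qed

lemma pivot_first_column:
  fixes A :: "'a::comm_ring_1 mat"
  assumes bz: "bezout_ring TYPE('a)" and ls: "locally_stable TYPE('a)"
    and A: "A \<in> carrier_mat m n" and m: "0 < m" and n: "0 < n"
  shows "\<exists>B. equivalent_mat A B \<and> (\<forall>i<m. \<forall>j<1. B $$ (0, 0) dvd B $$ (i, j))"
proof -
  obtain P where P: "P \<in> carrier_mat m m" "invertible_mat P"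
    and zero: "\<forall>i. 0 < i \<and> i < m \<longrightarrow> (P * A) $$ (i, 0) = 0"
    using clear_column_below[OF bz ls A m n] by blast
  have "(P * A) $$ (0, 0) dvd (P * A) $$ (i, 0)" if "i < m" for i
    using zero that by (cases i) auto
  then show ?thesis
    using equivalent_mat_mult_left[OF A P] by auto
qed

lemma pivot_next_column_single_row:
  fixes B :: "'a::comm_ring_1 mat"
  assumes bz: "bezout_ring TYPE('a)" and ls: "locally_stable TYPE('a)"
    and B: "B \<in> carrier_mat 1 n" and k: "0 < k" "k < n"
    and dvd: "\<forall>i<1. \<forall>j<k. B $$ (0, 0) dvd B $$ (i, j)"
  shows "\<exists>B'. equivalent_mat B B' \<and> (\<forall>i<1. \<forall>j<Suc k. B' $$ (0, 0) dvd B' $$ (i, j))"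
proof -
  obtain E where E: "E \<in> carrier_mat n n" "invertible_mat E"
    and gcd: "(B * E) $$ (0, 0) dvd B $$ (0, 0)" and zero: "(B * E) $$ (0, k) = 0"
    and keep: "\<forall>r<1. \<forall>s<n. s \<noteq> 0 \<longrightarrow> s \<noteq> k \<longrightarrow> (B * E) $$ (r, s) = B $$ (r, s)"
    using column_elimination[OF bz ls B _ k(2) _, of 0 0] k by auto
  have "(B * E) $$ (0, 0) dvd (B * E) $$ (0, j)" if "j < Suc k" for j
  proof -
    consider "j = 0" | "j = k" | "0 < j" "j < k"
      using \<open>j < Suc k\<close> by linarith
    then show ?thesis
    proof cases
      case 3
      then show ?thesis
        using keep k dvd gcd dvd_trans by fastforce
    qed (use zero in auto)
  qed
  then show ?thesis
    using equivalent_mat_mult_right[OF B E] by auto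
qed

text \<open>With column \<open>k\<close> vanishing below the second row, only the \<open>2 \<times> 2\<close> block in rows \<open>0, 1\<close>
  and columns \<open>0, k\<close> needs attention; its diagonal reduction makes the new pivot a common divisor.\<close>

lemma pivot_next_column_cleared:
  fixes B :: "'a::comm_ring_1 mat"
  assumes bz: "bezout_ring TYPE('a)" and ls: "locally_stable TYPE('a)"
    and B: "B \<in> carrier_mat m n" and m: "1 < m" and k: "0 < k" "k < n"
    and dvd: "\<forall>i<m. \<forall>j<k. B $$ (0, 0) dvd B $$ (i, j)"
    and zero: "\<forall>i. 1 < i \<and> i < m \<longrightarrow> B $$ (i, k) = 0"
  shows "\<exists>B'. equivalent_mat B B' \<and> (\<forall>i<m. \<forall>j<Suc k. B' $$ (0, 0) dvd B' $$ (i, j))"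
proof -
  obtain p1 p2 p3 p4 q1 q2 q3 q4 e1 e2 where
    detP: "p1 * p4 - p2 * p3 = 1" and detQ: "q1 * q4 - q2 * q3 = 1" and
    red: "(p1 * B $$ (0, 0) + p2 * B $$ (1, 0)) * q1 + (p1 * B $$ (0, k) + p2 * B $$ (1, k)) * q3 = e1"
      "(p1 * B $$ (0, 0) + p2 * B $$ (1, 0)) * q2 + (p1 * B $$ (0, k) + p2 * B $$ (1, k)) * q4 = 0"
      "(p3 * B $$ (0, 0) + p4 * B $$ (1, 0)) * q1 + (p3 * B $$ (0, k) + p4 * B $$ (1, k)) * q3 = 0"
      "(p3 * B $$ (0, 0) + p4 * B $$ (1, 0)) * q2 + (p3 * B $$ (0, k) + p4 * B $$ (1, k)) * q4 = e2"
    and e1_dvd: "e1 dvd e2" "e1 dvd B $$ (0, 0)"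
    using diagonal_reduction_2x2[OF bz ls,
        where a = "B $$ (0, 0)" and b = "B $$ (0, k)" and c = "B $$ (1, 0)" and d = "B $$ (1, k)"]
    by blast
  have rows: "0 < m" "1 < m" "(0::nat) \<noteq> 1" and cols: "0 < n" "k < n" "0 \<noteq> k"
    using m k by auto
  define C where "C = embed2_mat m 0 1 p1 p2 p3 p4 * B"
  define B' where "B' = C * embed2_mat n 0 k q1 q2 q3 q4"
  have C: "C \<in> carrier_mat m n"
    unfolding C_def using embed2_mat_carrier B by (rule mult_carrier_mat)
  have C_index: "C $$ (i, j) = (if i = 0 then p1 * B $$ (0, j) + p2 * B $$ (1, j)
      else if i = 1 then p3 * B $$ (0, j) + p4 * B $$ (1, j) else B $$ (i, j))"
    if "i < m" "j < n" for i j
    unfolding C_def using embed2_mat_mult_index[OF B rows that] .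
  have B'_index: "B' $$ (i, j) = (if j = 0 then C $$ (i, 0) * q1 + C $$ (i, k) * q3
      else if j = k then C $$ (i, 0) * q2 + C $$ (i, k) * q4 else C $$ (i, j))"
    if "i < m" "j < n" for i j
    unfolding B'_def using mult_embed2_mat_index[OF C cols that] .
  have "equivalent_mat B C"
    unfolding C_def using B _ invertible_embed2_mat[OF detP rows]
    by (rule equivalent_mat_mult_left) simp
  moreover have "equivalent_mat C B'"
    unfolding B'_def using C _ invertible_embed2_mat[OF detQ cols]
    by (rule equivalent_mat_mult_right) simp
  moreover have "B' $$ (0, 0) = e1"
    using B'_index[OF rows(1) cols(1)] C_index[OF rows(1) cols(1)] C_index[OF rows(1) cols(2)] red(1)
    by simp
  moreover have "e1 dvd B' $$ (i, j)" if "i < m" "j < Suc k" for i j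
  proof -
    have e1_dvd_B: "e1 dvd B $$ (i', j')" if "i' < m" "j' < k" for i' j'
      using dvd that e1_dvd(2) dvd_trans by blast
    consider "i < 2" "j = 0 \<or> j = k" | "1 < i" "j = 0 \<or> j = k" | "0 < j" "j < k"
      using \<open>j < Suc k\<close> by linarith
    then show ?thesis
    proof cases
      case 1
      then have "i = 0 \<or> i = 1" by auto
      then show ?thesis
        using 1(2) B'_index[OF that(1)] C_index[OF _ cols(1)] C_index[OF _ cols(2)] red e1_dvd rows cols k
        by auto
    next
      case 2
      then have "C $$ (i, k) = 0" "e1 dvd C $$ (i, 0)"
        using C_index[OF that(1)] zero e1_dvd_B[OF that(1) k(1)] cols that(1) by auto
      then show ?thesis
        using 2(2) B'_index[OF that(1)] cols by auto
    next
      case 3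
      then have "e1 dvd C $$ (i, j)"
        using C_index[OF that(1)] e1_dvd_B[OF rows(1)] e1_dvd_B[OF rows(2)] e1_dvd_B[OF that(1)] k
        by auto
      then show ?thesis
        using 3 B'_index[OF that(1)] k by auto
    qed
  qed
  ultimately show ?thesis
    using equivalent_mat_trans by metis
qed

lemma pivot_next_column:
  fixes B :: "'a::comm_ring_1 mat"
  assumes bz: "bezout_ring TYPE('a)" and ls: "locally_stable TYPE('a)"
    and B: "B \<in> carrier_mat m n" and m: "1 < m" and k: "0 < k" "k < n"
    and dvd: "\<forall>i<m. \<forall>j<k. B $$ (0, 0) dvd B $$ (i, j)"
  shows "\<exists>B'. equivalent_mat B B' \<and> (\<forall>i<m. \<forall>j<Suc k. B' $$ (0, 0) dvd B' $$ (i, j))"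
proof -
  obtain P where P: "P \<in> carrier_mat m m" "invertible_mat P"
    and row0: "\<forall>j<n. (P * B) $$ (0, j) = B $$ (0, j)"
    and zero: "\<forall>i. 1 < i \<and> i < m \<longrightarrow> (P * B) $$ (i, k) = 0"
    using clear_column_below[OF bz ls B m k(2)] by auto
  have PB: "P * B \<in> carrier_mat m n"
    using P B by simp
  have "(P * B) $$ (0, 0) dvd (P * B) $$ (i, j)" if "i < m" "j < k" for i j
    using row0 k dvd_mat_mult_left_index[OF P(1) B that(1)] that dvd by auto
  then obtain B' where "equivalent_mat (P * B) B'"
    and "\<forall>i<m. \<forall>j<Suc k. B' $$ (0, 0) dvd B' $$ (i, j)"
    using pivot_next_column_cleared[OF bz ls PB m k _ zero] by blast
  moreover have "equivalent_mat B (P * B)"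
    using B P by (rule equivalent_mat_mult_left)
  ultimately show ?thesis
    using equivalent_mat_trans by blast
qed

lemma pivot_divides_all:
  fixes A :: "'a::comm_ring_1 mat"
  assumes bz: "bezout_ring TYPE('a)" and ls: "locally_stable TYPE('a)"
    and A: "A \<in> carrier_mat m n" and m: "0 < m" and n: "0 < n"
  shows "\<exists>B. equivalent_mat A B \<and> (\<forall>i<m. \<forall>j<n. B $$ (0, 0) dvd B $$ (i, j))"
proof -
  have "\<exists>B. equivalent_mat A B \<and> (\<forall>i<m. \<forall>j<Suc k. B $$ (0, 0) dvd B $$ (i, j))" if "k < n" for k
    using that
  proof (induction k)
    case 0
    then show ?case
      using pivot_first_column[OF bz ls A m n] by simp
  next
    case (Suc k)
    then obtain B where AB: "equivalent_mat A B" and dvd: "\<forall>i<m. \<forall>j<Suc k. B $$ (0, 0) dvd B $$ (i, j)"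
      by auto
    have B: "B \<in> carrier_mat m n"
      using equivalent_mat_carrier[OF A AB] .
    have "\<exists>B'. equivalent_mat B B' \<and> (\<forall>i<m. \<forall>j<Suc (Suc k). B' $$ (0, 0) dvd B' $$ (i, j))"
    proof (cases "m = 1")
      case True
      then have "B \<in> carrier_mat 1 n" "\<forall>i<1. \<forall>j<Suc k. B $$ (0, 0) dvd B $$ (i, j)"
        using B dvd by auto
      then show ?thesis
        using pivot_next_column_single_row[OF bz ls _ zero_less_Suc Suc.prems] True by simp
    next
      case False
      then show ?thesis
        using pivot_next_column[OF bz ls B _ zero_less_Suc Suc.prems dvd] m by simp
    qed
    then show ?case
      using AB equivalent_mat_trans by blast
  qed
  from this[of "n - 1"] show ?thesis
    using n by simp
qed

definition add_row0_mat :: "nat \<Rightarrow> (nat \<Rightarrow> 'a) \<Rightarrow> 'a::comm_ring_1 mat" where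
  "add_row0_mat n q = mat n n (\<lambda>(i, j). if i = j then 1 else if j = 0 then q i else 0)"

definition add_col0_mat :: "nat \<Rightarrow> (nat \<Rightarrow> 'a) \<Rightarrow> 'a::comm_ring_1 mat" where
  "add_col0_mat n q = mat n n (\<lambda>(i, j). if i = j then 1 else if i = 0 then q j else 0)"

lemma add_row0_mat_carrier [simp]: "add_row0_mat n q \<in> carrier_mat n n"
  and add_row0_mat_dim [simp]: "dim_row (add_row0_mat n q) = n" "dim_col (add_row0_mat n q) = n"
  unfolding add_row0_mat_def by simp_all

lemma add_col0_mat_carrier [simp]: "add_col0_mat n q \<in> carrier_mat n n"
  and add_col0_mat_dim [simp]: "dim_row (add_col0_mat n q) = n" "dim_col (add_col0_mat n q) = n"
  unfolding add_col0_mat_def by simp_all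

lemma add_row0_mat_mult_index:
  fixes A :: "'a::comm_ring_1 mat"
  assumes A: "A \<in> carrier_mat m n" and rs: "r < m" "s < n"
  shows "(add_row0_mat m q * A) $$ (r, s) = A $$ (r, s) + (if r = 0 then 0 else q r * A $$ (0, s))"
proof -
  have "(add_row0_mat m q * A) $$ (r, s) = (\<Sum>k\<in>{0..<m}. add_row0_mat m q $$ (r, k) * A $$ (k, s))"
    using A rs by (simp add: scalar_prod_def carrier_matD)
  also have "\<dots> = (\<Sum>k\<in>{0..<m}. (if k = r then A $$ (r, s) else 0)
      + (if k = 0 then (if r = 0 then 0 else q r * A $$ (0, s)) else 0))"
    by (rule sum.cong) (use rs in \<open>auto simp: add_row0_mat_def\<close>)
  also have "\<dots> = A $$ (r, s) + (if r = 0 then 0 else q r * A $$ (0, s))"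
    using rs by (simp add: sum.distrib)
  finally show ?thesis .
qed

lemma mult_add_col0_mat_index:
  fixes A :: "'a::comm_ring_1 mat"
  assumes A: "A \<in> carrier_mat m n" and rs: "r < m" "s < n"
  shows "(A * add_col0_mat n q) $$ (r, s) = A $$ (r, s) + (if s = 0 then 0 else A $$ (r, 0) * q s)"
proof -
  have "(A * add_col0_mat n q) $$ (r, s) = (\<Sum>k\<in>{0..<n}. A $$ (r, k) * add_col0_mat n q $$ (k, s))"
    using A rs by (simp add: scalar_prod_def carrier_matD)
  also have "\<dots> = (\<Sum>k\<in>{0..<n}. (if k = s then A $$ (r, s) else 0)
      + (if k = 0 then (if s = 0 then 0 else A $$ (r, 0) * q s) else 0))"
    by (rule sum.cong) (use rs in \<open>auto simp: add_col0_mat_def\<close>)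
  also have "\<dots> = A $$ (r, s) + (if s = 0 then 0 else A $$ (r, 0) * q s)"
    using rs by (simp add: sum.distrib)
  finally show ?thesis .
qed

lemma invertible_add_row0_mat: "invertible_mat (add_row0_mat n q :: 'a::comm_ring_1 mat)"
proof -
  have inverse: "add_row0_mat n p * add_row0_mat n (\<lambda>i. - p i) = (1\<^sub>m n :: 'a mat)" for p
  proof (rule eq_matI)
    fix r s assume "r < dim_row (1\<^sub>m n :: 'a mat)" "s < dim_col (1\<^sub>m n :: 'a mat)"
    then have rs: "r < n" "s < n" by auto
    show "(add_row0_mat n p * add_row0_mat n (\<lambda>i. - p i)) $$ (r, s) = 1\<^sub>m n $$ (r, s)"
      unfolding add_row0_mat_mult_index[OF add_row0_mat_carrier rs] using rs
      by (auto simp: add_row0_mat_def)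
  qed auto
  show ?thesis
    unfolding invertible_mat_iff_inverse[OF add_row0_mat_carrier]
    using inverse[of q] inverse[of "\<lambda>i. - q i"] by auto
qed

lemma invertible_add_col0_mat: "invertible_mat (add_col0_mat n q :: 'a::comm_ring_1 mat)"
proof -
  have inverse: "add_col0_mat n p * add_col0_mat n (\<lambda>i. - p i) = (1\<^sub>m n :: 'a mat)" for p
  proof (rule eq_matI)
    fix r s assume "r < dim_row (1\<^sub>m n :: 'a mat)" "s < dim_col (1\<^sub>m n :: 'a mat)"
    then have rs: "r < n" "s < n" by auto
    show "(add_col0_mat n p * add_col0_mat n (\<lambda>i. - p i)) $$ (r, s) = 1\<^sub>m n $$ (r, s)"
      unfolding mult_add_col0_mat_index[OF add_col0_mat_carrier rs] using rs
      by (auto simp: add_col0_mat_def)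
  qed auto
  show ?thesis
    unfolding invertible_mat_iff_inverse[OF add_col0_mat_carrier]
    using inverse[of q] inverse[of "\<lambda>i. - q i"] by auto
qed

lemma clear_first_row_and_column:
  fixes C :: "'a::comm_ring_1 mat"
  assumes C: "C \<in> carrier_mat m n" and m: "0 < m" and n: "0 < n"
    and dvd: "\<And>i j. i < m \<Longrightarrow> j < n \<Longrightarrow> C $$ (0, 0) dvd C $$ (i, j)"
  shows "\<exists>C'. equivalent_mat C C' \<and> C' $$ (0, 0) = C $$ (0, 0) \<and>
           (\<forall>i. 0 < i \<and> i < m \<longrightarrow> C' $$ (i, 0) = 0) \<and> (\<forall>j. 0 < j \<and> j < n \<longrightarrow> C' $$ (0, j) = 0) \<and>
           (\<forall>i<m. \<forall>j<n. C $$ (0, 0) dvd C' $$ (i, j))"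
proof -
  define g where "g = C $$ (0, 0)"
  have "\<forall>i. \<exists>k. i < m \<longrightarrow> C $$ (i, 0) = g * k"
    using dvd n unfolding g_def dvd_def by blast
  then obtain qr where qr: "\<forall>i. i < m \<longrightarrow> C $$ (i, 0) = g * qr i"
    by (rule choice[THEN exE])
  have "\<forall>j. \<exists>k. j < n \<longrightarrow> C $$ (0, j) = g * k"
    using dvd m unfolding g_def dvd_def by blast
  then obtain qc where qc: "\<forall>j. j < n \<longrightarrow> C $$ (0, j) = g * qc j"
    by (rule choice[THEN exE])
  define Y where "Y = add_row0_mat m (\<lambda>i. - qr i) * C"
  define C' where "C' = Y * add_col0_mat n (\<lambda>j. - qc j)"
  have Y: "Y \<in> carrier_mat m n"
    unfolding Y_def using add_row0_mat_carrier C by (rule mult_carrier_mat)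
  have Y_index: "Y $$ (r, s) = C $$ (r, s) + (if r = 0 then 0 else - qr r * C $$ (0, s))"
    if "r < m" "s < n" for r s
    unfolding Y_def using add_row0_mat_mult_index[OF C that] .
  have C'_index: "C' $$ (r, s) = Y $$ (r, s) + (if s = 0 then 0 else Y $$ (r, 0) * - qc s)"
    if "r < m" "s < n" for r s
    unfolding C'_def using mult_add_col0_mat_index[OF Y that] .
  have CC': "equivalent_mat C C'"
    unfolding C'_def Y_def
    by (rule equivalent_mat_trans[OF equivalent_mat_mult_left equivalent_mat_mult_right])
      (use C in \<open>auto simp: invertible_add_row0_mat invertible_add_col0_mat\<close>)
  moreover have "C' $$ (0, 0) = g"
  proof -
    have "C' $$ (0, 0) = Y $$ (0, 0)"
      using C'_index[OF m n] by simp
    also have "\<dots> = C $$ (0, 0)"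
      using Y_index[OF m n] by simp
    finally show ?thesis
      unfolding g_def .
  qed
  moreover have "C' $$ (i, 0) = 0" if "0 < i" "i < m" for i
    using C'_index[of i 0] Y_index[of i 0] that n qr[rule_format, OF \<open>i < m\<close>]
    by (simp add: g_def[symmetric])
  moreover have "C' $$ (0, j) = 0" if "0 < j" "j < n" for j
    using C'_index[of 0 j] Y_index[of 0 j] Y_index[of 0 0] that m qc[rule_format, OF \<open>j < n\<close>]
    by (simp add: g_def[symmetric])
  moreover have "g dvd C' $$ (i, j)" if "i < m" "j < n" for i j
    using equivalent_mat_dvd_index[OF C CC' _ that] dvd unfolding g_def by blast
  ultimately show ?thesis
    unfolding g_def by blast
qed

lemma four_block_mat_Suc_carrier:
  "G \<in> carrier_mat 1 1 \<Longrightarrow> X \<in> carrier_mat m n \<Longrightarrow> four_block_mat G B C X \<in> carrier_mat (Suc m) (Suc n)"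
  using four_block_carrier_mat[of G 1 1 X m n] by simp

lemma invertible_four_block_one:
  fixes P :: "'a::comm_ring_1 mat"
  assumes P: "P \<in> carrier_mat k k" "invertible_mat P"
  shows "invertible_mat (four_block_mat (1\<^sub>m 1) (0\<^sub>m 1 k) (0\<^sub>m k 1) P)"
proof -
  have block_mult: "four_block_mat (1\<^sub>m 1) (0\<^sub>m 1 k) (0\<^sub>m k 1) X * four_block_mat (1\<^sub>m 1) (0\<^sub>m 1 k) (0\<^sub>m k 1) Y
      = four_block_mat (1\<^sub>m 1) (0\<^sub>m 1 k) (0\<^sub>m k 1) (X * Y)"
    if "X \<in> carrier_mat k k" "Y \<in> carrier_mat k k" for X Y :: "'a mat"
    using that by (subst mult_four_block_mat[of _ 1 1 _ k _ k _ _ 1 _ k]) (auto intro!: cong_four_block_mat)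
  obtain P' where P': "P' \<in> carrier_mat k k" "P * P' = 1\<^sub>m k" "P' * P = 1\<^sub>m k"
    using P invertible_mat_iff_inverse by blast
  note carrier = four_block_mat_Suc_carrier[OF one_carrier_mat, of _ k k "0\<^sub>m 1 k" "0\<^sub>m k 1"]
  show ?thesis
    unfolding invertible_mat_iff_inverse[OF carrier[OF P(1)]]
    using block_mult P P' carrier[OF P'(1)]
    by (intro bexI[of _ "four_block_mat (1\<^sub>m 1) (0\<^sub>m 1 k) (0\<^sub>m k 1) P'"]) auto
qed

lemma equivalent_mat_four_block:
  fixes D :: "'a::comm_ring_1 mat"
  assumes G: "G \<in> carrier_mat 1 1" and D: "D \<in> carrier_mat m n" and DD': "equivalent_mat D D'"
  shows "equivalent_mat (four_block_mat G (0\<^sub>m 1 n) (0\<^sub>m m 1) D) (four_block_mat G (0\<^sub>m 1 n) (0\<^sub>m m 1) D')"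
proof -
  obtain P Q where P: "P \<in> carrier_mat m m" "invertible_mat P"
    and Q: "Q \<in> carrier_mat n n" "invertible_mat Q" and D': "D' = P * D * Q"
    using DD' D unfolding equivalent_mat_def by auto
  define P1 where "P1 = four_block_mat (1\<^sub>m 1) (0\<^sub>m 1 m) (0\<^sub>m m 1) P"
  define Q1 where "Q1 = four_block_mat (1\<^sub>m 1) (0\<^sub>m 1 n) (0\<^sub>m n 1) Q"
  note block_carrier = four_block_mat_Suc_carrier[OF G]
  have P1: "P1 \<in> carrier_mat (Suc m) (Suc m)" and Q1: "Q1 \<in> carrier_mat (Suc n) (Suc n)"
    unfolding P1_def Q1_def using P(1) Q(1) by (simp_all add: four_block_mat_Suc_carrier)
  have "P1 * four_block_mat G (0\<^sub>m 1 n) (0\<^sub>m m 1) D = four_block_mat G (0\<^sub>m 1 n) (0\<^sub>m m 1) (P * D)"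
    unfolding P1_def using G D P
    by (subst mult_four_block_mat[of _ 1 1 _ m _ m _ _ 1 _ n]) (auto intro!: cong_four_block_mat)
  moreover have "four_block_mat G (0\<^sub>m 1 n) (0\<^sub>m m 1) (P * D) * Q1
      = four_block_mat G (0\<^sub>m 1 n) (0\<^sub>m m 1) D'"
    unfolding Q1_def D' using G D P Q
    by (subst mult_four_block_mat[of _ 1 1 _ n _ m _ _ 1 _ n]) (auto intro!: cong_four_block_mat)
  moreover have "equivalent_mat (four_block_mat G (0\<^sub>m 1 n) (0\<^sub>m m 1) D)
      (P1 * four_block_mat G (0\<^sub>m 1 n) (0\<^sub>m m 1) D)"
    using block_carrier[OF D] P1 invertible_four_block_one[OF P] unfolding P1_def
    by (rule equivalent_mat_mult_left)
  moreover have "equivalent_mat (four_block_mat G (0\<^sub>m 1 n) (0\<^sub>m m 1) (P * D))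
      (four_block_mat G (0\<^sub>m 1 n) (0\<^sub>m m 1) (P * D) * Q1)"
    using block_carrier[OF mult_carrier_mat[OF P(1) D]] Q1 invertible_four_block_one[OF Q]
    unfolding Q1_def by (rule equivalent_mat_mult_right)
  ultimately show ?thesis
    using equivalent_mat_trans by metis
qed

lemma four_block_decomposition:
  fixes C :: "'a::comm_ring_1 mat"
  assumes C: "C \<in> carrier_mat (Suc m) (Suc n)"
    and col: "\<And>i. 0 < i \<Longrightarrow> i < Suc m \<Longrightarrow> C $$ (i, 0) = 0"
    and row: "\<And>j. 0 < j \<Longrightarrow> j < Suc n \<Longrightarrow> C $$ (0, j) = 0"
  shows "C = four_block_mat (mat 1 1 (\<lambda>_. C $$ (0, 0))) (0\<^sub>m 1 n) (0\<^sub>m m 1)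
               (mat m n (\<lambda>(i, j). C $$ (Suc i, Suc j)))"
    (is "C = ?B")
proof (rule eq_matI)
  fix i j assume "i < dim_row ?B" "j < dim_col ?B"
  then have ij: "i < Suc m" "j < Suc n" by auto
  show "C $$ (i, j) = ?B $$ (i, j)"
  proof (cases i)
    case 0
    then show ?thesis using ij row by (cases j) auto
  next
    case (Suc i')
    then show ?thesis using ij col by (cases j) auto
  qed
qed (use C in auto)

lemma diagonal_divisibility_four_block:
  fixes D :: "'a::comm_ring_1 mat"
  assumes D: "D \<in> carrier_mat m n" "diagonal_divisibility D"
    and g: "\<And>i j. i < m \<Longrightarrow> j < n \<Longrightarrow> g dvd D $$ (i, j)"
  shows "diagonal_divisibility (four_block_mat (mat 1 1 (\<lambda>_. g)) (0\<^sub>m 1 n) (0\<^sub>m m 1) D)"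
    (is "diagonal_divisibility ?B")
  unfolding diagonal_divisibility_def
proof (intro conjI allI impI)
  fix i j assume "i < dim_row ?B" "j < dim_col ?B" "i \<noteq> j"
  then show "?B $$ (i, j) = 0"
    using D unfolding diagonal_divisibility_def by (cases i; cases j) auto
next
  fix i assume i: "Suc i < dim_row ?B" "Suc i < dim_col ?B"
  show "?B $$ (i, i) dvd ?B $$ (Suc i, Suc i)"
  proof (cases i)
    case 0
    then show ?thesis using i D g by auto
  next
    case (Suc i')
    then show ?thesis using i D unfolding diagonal_divisibility_def by auto
  qed
qed

lemma four_block_diagonal_reduction:
  fixes D0 :: "'a::comm_ring_1 mat"
  assumes D0: "D0 \<in> carrier_mat m n" and D0D: "equivalent_mat D0 D" and D: "diagonal_divisibility D"
    and g: "\<And>i j. i < m \<Longrightarrow> j < n \<Longrightarrow> g dvd D0 $$ (i, j)"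
  shows "equivalent_mat (four_block_mat (mat 1 1 (\<lambda>_. g)) (0\<^sub>m 1 n) (0\<^sub>m m 1) D0)
           (four_block_mat (mat 1 1 (\<lambda>_. g)) (0\<^sub>m 1 n) (0\<^sub>m m 1) D) \<and>
         diagonal_divisibility (four_block_mat (mat 1 1 (\<lambda>_. g)) (0\<^sub>m 1 n) (0\<^sub>m m 1) D)"
proof
  show "equivalent_mat (four_block_mat (mat 1 1 (\<lambda>_. g)) (0\<^sub>m 1 n) (0\<^sub>m m 1) D0)
      (four_block_mat (mat 1 1 (\<lambda>_. g)) (0\<^sub>m 1 n) (0\<^sub>m m 1) D)"
    by (rule equivalent_mat_four_block[OF _ D0 D0D]) simp
  show "diagonal_divisibility (four_block_mat (mat 1 1 (\<lambda>_. g)) (0\<^sub>m 1 n) (0\<^sub>m m 1) D)"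
    using equivalent_mat_dvd_index[OF D0 D0D g]
    by (intro diagonal_divisibility_four_block[OF equivalent_mat_carrier[OF D0 D0D] D])
qed

lemma bezout_locally_stable_diagonal_reduction:
  fixes A :: "'a::comm_ring_1 mat"
  assumes bz: "bezout_ring TYPE('a)" and ls: "locally_stable TYPE('a)"
  shows "A \<in> carrier_mat m n \<Longrightarrow> \<exists>D. equivalent_mat A D \<and> diagonal_divisibility D"
proof (induction m arbitrary: n A)
  case 0
  then show ?case
    by (intro exI[of _ A]) (simp add: equivalent_mat_refl diagonal_divisibility_def)
next
  case (Suc m)
  show ?case
  proof (cases n)
    case 0
    then show ?thesis
      using Suc.prems by (intro exI[of _ A]) (simp add: equivalent_mat_refl diagonal_divisibility_def)
  next
    case (Suc n')
    obtain B where AB: "equivalent_mat A B" and pivot: "\<forall>i<Suc m. \<forall>j<n. B $$ (0, 0) dvd B $$ (i, j)"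
      using pivot_divides_all[OF bz ls Suc.prems] Suc by auto
    have B: "B \<in> carrier_mat (Suc m) n"
      using equivalent_mat_carrier[OF Suc.prems AB] .
    obtain C where BC: "equivalent_mat B C" and C00: "C $$ (0, 0) = B $$ (0, 0)"
      and col: "\<forall>i. 0 < i \<and> i < Suc m \<longrightarrow> C $$ (i, 0) = 0"
      and row: "\<forall>j. 0 < j \<and> j < n \<longrightarrow> C $$ (0, j) = 0"
      and dvd: "\<forall>i<Suc m. \<forall>j<n. B $$ (0, 0) dvd C $$ (i, j)"
      using clear_first_row_and_column[OF B] pivot Suc by auto
    have C: "C \<in> carrier_mat (Suc m) (Suc n')"
      using equivalent_mat_carrier[OF B BC] Suc by simp
    define g where "g = C $$ (0, 0)"
    define D0 where "D0 = mat m n' (\<lambda>(i, j). C $$ (Suc i, Suc j))"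
    have D0: "D0 \<in> carrier_mat m n'"
      unfolding D0_def by simp
    have C_block: "C = four_block_mat (mat 1 1 (\<lambda>_. g)) (0\<^sub>m 1 n') (0\<^sub>m m 1) D0"
      unfolding g_def D0_def using C col row Suc by (intro four_block_decomposition) auto
    obtain D where D0D: "equivalent_mat D0 D" and D: "diagonal_divisibility D"
      using Suc.IH[OF D0] by blast
    have "g dvd D0 $$ (i, j)" if "i < m" "j < n'" for i j
      using dvd C00 Suc that unfolding g_def D0_def by auto
    with D0D D have "equivalent_mat C (four_block_mat (mat 1 1 (\<lambda>_. g)) (0\<^sub>m 1 n') (0\<^sub>m m 1) D)"
      and "diagonal_divisibility (four_block_mat (mat 1 1 (\<lambda>_. g)) (0\<^sub>m 1 n') (0\<^sub>m m 1) D)"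
      unfolding C_block using four_block_diagonal_reduction[OF D0] by blast+
    then show ?thesis
      using AB BC equivalent_mat_trans by blast
  qed
qed

lemma elementary_divisor_ring_imp_bezout_ring:
  assumes edr: "elementary_divisor_ring TYPE('a::comm_ring_1)"
  shows "bezout_ring TYPE('a)"
  unfolding bezout_ring_def
proof (intro allI impI)
  fix S :: "'a set"
  assume "finite S"
  then obtain xs where S: "S = set xs"
    using finite_list by blast
  define n where "n = length xs"
  define A where "A = (mat 1 n (\<lambda>(i, j). xs ! j) :: 'a mat)"
  have A: "A \<in> carrier_mat 1 n"
    unfolding A_def by simp
  obtain D where AD: "equivalent_mat A D" and diag: "diagonal_divisibility D"
    using edr unfolding elementary_divisor_ring_def admits_diagonal_reduction_iff by blast
  have D: "D \<in> carrier_mat 1 n"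
    using equivalent_mat_carrier[OF A AD] .
  have A_in_S: "A $$ (i, j) \<in> gen_ideal S" if "i < 1" "j < n" for i j
    using that unfolding A_def S n_def by (auto intro: gen_ideal_base)
  show "\<exists>d. gen_ideal S = range ((*) d)"
  proof (cases "n = 0")
    case True
    then have "gen_ideal S = range ((*) 0)"
      using gen_ideal_sum[of "{}"] by (intro gen_ideal_eq_principal) (auto simp: S n_def)
    then show ?thesis ..
  next
    case False
    define d where "d = D $$ (0, 0)"
    have "d \<in> gen_ideal S"
      unfolding d_def using equivalent_mat_index_in_gen_ideal[OF A AD A_in_S] False by simp
    moreover have "d dvd s" if "s \<in> S" for s
    proof -
      obtain j where j: "j < n" "s = A $$ (0, j)"
        using \<open>s \<in> S\<close> unfolding S A_def n_def by (auto simp: in_set_conv_nth)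
      have "D $$ (i, j) \<in> gen_ideal {d}" if "i < 1" "j < n" for i j
        using diag D that unfolding diagonal_divisibility_def d_def dvd_iff_in_gen_ideal_singleton[symmetric]
        by (cases j) auto
      then have "A $$ (0, j) \<in> gen_ideal {d}"
        using equivalent_mat_index_in_gen_ideal[OF D equivalent_mat_sym[OF A AD]] j by simp
      then show ?thesis
        unfolding j dvd_iff_in_gen_ideal_singleton .
    qed
    ultimately have "gen_ideal S = range ((*) d)"
      by (rule gen_ideal_eq_principal)
    then show ?thesis ..
  qed
qed

theorem theorem3p3:
  assumes "locally_stable TYPE('a::comm_ring_1)"
  shows "elementary_divisor_ring TYPE('a) \<longleftrightarrow> bezout_ring TYPE('a)"
proof
  assume "elementary_divisor_ring TYPE('a)"
  then show "bezout_ring TYPE('a)"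
    by (rule elementary_divisor_ring_imp_bezout_ring)
next
  assume "bezout_ring TYPE('a)"
  then have "admits_diagonal_reduction A" for A :: "'a mat"
    using bezout_locally_stable_diagonal_reduction[OF _ assms carrier_matI]
    unfolding admits_diagonal_reduction_iff by blast
  then show "elementary_divisor_ring TYPE('a)"
    unfolding elementary_divisor_ring_def by blast
qed

end
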